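(* Let $(X,G)$ be topologically transitive, let $X_0$ be a dense $G$-invariant subset of $X_t$, and let $\lambda$ be a $G$-invariant Borel probability measure on $X$ with $\lambda(X_0)=1$ ($X_0$ assumed $\lambda$-measurable). Then $S^{eq}_0\subseteq\bigcap_{N\in\mathcal N}K_0(N)$.
   Context: $G$ is a group acting by homeomorphisms $x\mapsto gx$ on a compact metrizable space $X$, topologically transitive; $X_t:=\{x\in X:\overline{Gx}=X\}$. $\mathcal N$ is the family of all closed $G$-invariant (for the diagonal action) subsets of $X^2$; for $N\in\mathcal N$, $N_x:=\{y:(x,y)\in N\}$ and $d_N(x,x'):=\lambda(N_x\triangle N_{x'})$; $K_0(N):=\{(x,x')\in X_0^2:d_N(x,x')=0\}$. For a continuous $G$-equivariant map $\pi:X_0\to Y$ into a compact metrizable minimal equicontinuous system $(Y,G)$, $S^\pi_0:=\{(x,x')\in X_0^2:\pi(x)=\pi(x')\}$, and $S^{eq}_0:=\bigcap_\pi S^\pi_0$ over all such $Y,\pi$. *)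

theory Defs
  imports "HOL-Probability.Probability" "HOL-Algebra.Group"
begin

definition homeo_action :: "('g, 'm) monoid_scheme \<Rightarrow> 'a::topological_space set \<Rightarrow> ('g \<Rightarrow> 'a \<Rightarrow> 'a) \<Rightarrow> bool" where
  "homeo_action G S act \<longleftrightarrow>
     group G \<and>
     (\<forall>g\<in>carrier G. \<forall>x\<in>S. act g x \<in> S) \<and>
     (\<forall>g\<in>carrier G. continuous_on S (act g)) \<and>
     (\<forall>x\<in>S. act \<one>\<^bsub>G\<^esub> x = x) \<and>
     (\<forall>g\<in>carrier G. \<forall>h\<in>carrier G. \<forall>x\<in>S. act (g \<otimes>\<^bsub>G\<^esub> h) x = act g (act h x))"

definition orbit :: "('g, 'm) monoid_scheme \<Rightarrow> ('g \<Rightarrow> 'a \<Rightarrow> 'a) \<Rightarrow> 'a \<Rightarrow> 'a set" where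
  "orbit G act x = (\<lambda>g. act g x) ` carrier G"

definition top_transitive :: "('g, 'm) monoid_scheme \<Rightarrow> 'a::topological_space set \<Rightarrow> ('g \<Rightarrow> 'a \<Rightarrow> 'a) \<Rightarrow> bool" where
  "top_transitive G S act \<longleftrightarrow>
     (\<forall>U V. openin (top_of_set S) U \<longrightarrow> openin (top_of_set S) V \<longrightarrow> U \<noteq> {} \<longrightarrow> V \<noteq> {} \<longrightarrow>
        (\<exists>g\<in>carrier G. act g ` U \<inter> V \<noteq> {}))"

definition transitive_points :: "('g, 'm) monoid_scheme \<Rightarrow> 'a::topological_space set \<Rightarrow> ('g \<Rightarrow> 'a \<Rightarrow> 'a) \<Rightarrow> 'a set" where
  "transitive_points G S act = {x\<in>S. closure (orbit G act x) = S}"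

definition G_invariant :: "('g, 'm) monoid_scheme \<Rightarrow> ('g \<Rightarrow> 'a \<Rightarrow> 'a) \<Rightarrow> 'a set \<Rightarrow> bool" where
  "G_invariant G act A \<longleftrightarrow> (\<forall>g\<in>carrier G. act g ` A = A)"

definition closed_inv_relations :: "('g, 'm) monoid_scheme \<Rightarrow> 'a::topological_space set \<Rightarrow> ('g \<Rightarrow> 'a \<Rightarrow> 'a) \<Rightarrow> ('a \<times> 'a) set set" where
  "closed_inv_relations G S act =
     {N. N \<subseteq> S \<times> S \<and> closed N \<and> G_invariant G (\<lambda>g (x, y). (act g x, act g y)) N}"

definition rel_section :: "('a \<times> 'b) set \<Rightarrow> 'a \<Rightarrow> 'b set" where
  "rel_section N x = {y. (x, y) \<in> N}"

definition d_N :: "'a measure \<Rightarrow> ('a \<times> 'a) set \<Rightarrow> 'a \<Rightarrow> 'a \<Rightarrow> real" where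
  "d_N lam N x x' = measure lam ((rel_section N x - rel_section N x') \<union> (rel_section N x' - rel_section N x))"

definition K0 :: "'a measure \<Rightarrow> 'a set \<Rightarrow> ('a \<times> 'a) set \<Rightarrow> ('a \<times> 'a) set" where
  "K0 lam X0 N = {(x, x'). x \<in> X0 \<and> x' \<in> X0 \<and> d_N lam N x x' = 0}"

text \<open>Every compact metrizable space
  embeds into the Hilbert cube, so Y is taken as a compact subset of nat \<Rightarrow> real
  (product topology, with its standard compatible metric).\<close>
definition minimal_equicontinuous_system ::
  "('g, 'm) monoid_scheme \<Rightarrow> (nat \<Rightarrow> real) set \<Rightarrow> ('g \<Rightarrow> (nat \<Rightarrow> real) \<Rightarrow> (nat \<Rightarrow> real)) \<Rightarrow> bool" where
  "minimal_equicontinuous_system G Y actY \<longleftrightarrow>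
     compact Y \<and> Y \<noteq> {} \<and> homeo_action G Y actY \<and>
     (\<forall>y\<in>Y. closure (orbit G actY y) = Y) \<and>
     (\<forall>e>0. \<exists>d>0. \<forall>y\<in>Y. \<forall>y'\<in>Y. dist y y' < d \<longrightarrow>
        (\<forall>g\<in>carrier G. dist (actY g y) (actY g y') < e))"

definition equivariant_factor ::
  "('g, 'm) monoid_scheme \<Rightarrow> 'a::topological_space set \<Rightarrow> ('g \<Rightarrow> 'a \<Rightarrow> 'a) \<Rightarrow>
   (nat \<Rightarrow> real) set \<Rightarrow> ('g \<Rightarrow> (nat \<Rightarrow> real) \<Rightarrow> (nat \<Rightarrow> real)) \<Rightarrow> ('a \<Rightarrow> nat \<Rightarrow> real) \<Rightarrow> bool" where
  "equivariant_factor G X0 act Y actY \<pi> \<longleftrightarrow>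
     continuous_on X0 \<pi> \<and> \<pi> ` X0 \<subseteq> Y \<and>
     (\<forall>g\<in>carrier G. \<forall>x\<in>X0. \<pi> (act g x) = actY g (\<pi> x))"

definition S_pi :: "'a set \<Rightarrow> ('a \<Rightarrow> 'b) \<Rightarrow> ('a \<times> 'a) set" where
  "S_pi X0 \<pi> = {(x, x'). x \<in> X0 \<and> x' \<in> X0 \<and> \<pi> x = \<pi> x'}"

definition S_eq :: "('g, 'm) monoid_scheme \<Rightarrow> 'a::topological_space set \<Rightarrow> ('g \<Rightarrow> 'a \<Rightarrow> 'a) \<Rightarrow> ('a \<times> 'a) set" where
  "S_eq G X0 act = (X0 \<times> X0) \<inter>
     (\<Inter>{S_pi X0 \<pi> | \<pi>. \<exists>Y actY. minimal_equicontinuous_system G Y actY \<and> equivariant_factor G X0 act Y actY \<pi>})"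

end

theory Submission
  imports Defs
begin

text \<open>The pseudometric \<open>d_N\<close> is \<open>G\<close>-invariant on \<open>X0\<close>. All points of \<open>X0\<close>
  have dense orbits and \<open>\<lambda>\<close> is invariant, so all sections \<open>N_x\<close>, \<open>x \<in> X0\<close>, have the same
  measure; as \<open>N\<close> is closed, \<open>x \<mapsto> N_x\<close> is upper semicontinuous in measure, which makes \<open>d_N\<close>
  continuous on \<open>X0\<close>. Disjoint translates of a ball of positive measure bound the size of
  separated subsets of an orbit, so \<open>d_N\<close> is totally bounded. Recording the \<open>d_N\<close>-distances to a
  countable dense subset maps \<open>X0\<close> into the Hilbert cube, isometrically for the sup norm; the
  closure \<open>Y\<close> of the image is compact, the isometric action extends to \<open>Y\<close>, and \<open>Y\<close> is a minimal
  equicontinuous factor that identifies exactly the pairs at \<open>d_N\<close>-distance \<open>0\<close>. Hence every pair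
  in \<open>S_eq\<close> has \<open>d_N\<close>-distance \<open>0\<close>.\<close>

lemma homeo_action_inv_cancel:
  assumes act: "homeo_action G S act" and g: "g \<in> carrier G" and x: "x \<in> S"
  shows "act (inv\<^bsub>G\<^esub> g) (act g x) = x" and "act g (act (inv\<^bsub>G\<^esub> g) x) = x"
proof -
  have G: "group G" using act unfolding homeo_action_def by blast
  then have ig: "inv\<^bsub>G\<^esub> g \<in> carrier G" using g by simp
  show "act (inv\<^bsub>G\<^esub> g) (act g x) = x"
    using act group.l_inv[OF G g] g ig x unfolding homeo_action_def by metis
  show "act g (act (inv\<^bsub>G\<^esub> g) x) = x"
    using act group.r_inv[OF G g] g ig x unfolding homeo_action_def by metis
qed

lemma homeo_action_image_eq_vimage:
  assumes act: "homeo_action G S act" and g: "g \<in> carrier G" and A: "A \<subseteq> S"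
  shows "act g ` A = act (inv\<^bsub>G\<^esub> g) -` A \<inter> S"
proof -
  have "act g x \<in> S" if "x \<in> S" for x using act g that unfolding homeo_action_def by blast
  then show ?thesis
    using A homeo_action_inv_cancel[OF act g] by (auto intro: rev_image_eqI)
qed

lemma homeo_action_restrict:
  assumes act: "homeo_action G S act" and T: "T \<subseteq> S" and "G_invariant G act T"
  shows "homeo_action G T act"
proof -
  have "group G" and "\<And>x. x \<in> S \<Longrightarrow> act \<one>\<^bsub>G\<^esub> x = x"
    and "\<And>g h x. \<lbrakk>g \<in> carrier G; h \<in> carrier G; x \<in> S\<rbrakk> \<Longrightarrow> act (g \<otimes>\<^bsub>G\<^esub> h) x = act g (act h x)"
    using act unfolding homeo_action_def by auto
  moreover have "act g x \<in> T" if "g \<in> carrier G" "x \<in> T" for g x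
    using assms(3) that unfolding G_invariant_def by blast
  moreover have "continuous_on T (act g)" if "g \<in> carrier G" for g
    using act that continuous_on_subset[OF _ T] unfolding homeo_action_def by blast
  ultimately show ?thesis
    unfolding homeo_action_def using T by blast
qed

lemma compact_countable_subcover:
  fixes X :: "'a::metric_space set"
  assumes "compact X" and opn: "\<And>i. i \<in> I \<Longrightarrow> openin (top_of_set X) (U i)"
    and cover: "S \<subseteq> (\<Union>i\<in>I. U i)"
  obtains J where "J \<subseteq> I" "countable J" "S \<subseteq> (\<Union>i\<in>J. U i)"
proof -
  have "\<forall>n::nat. \<exists>K. finite K \<and> X \<subseteq> (\<Union>c\<in>K. ball c (1 / Suc n))"
    using \<open>compact X\<close> unfolding compact_eq_totally_bounded by simp
  then obtain K where K: "\<And>n. finite (K n)" "\<And>n. X \<subseteq> (\<Union>c\<in>K n. ball c (1 / Suc n))"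
    by metis
  define balls where "balls = (\<lambda>(n, c). ball c (1 / Suc n)) ` (SIGMA n:UNIV. K n)"
  define good where "good B \<longleftrightarrow> (\<exists>i\<in>I. B \<inter> X \<subseteq> U i)" for B
  define idx where "idx B = (SOME i. i \<in> I \<and> B \<inter> X \<subseteq> U i)" for B
  have idx: "idx B \<in> I" "B \<inter> X \<subseteq> U (idx B)" if "good B" for B
    using someI_ex[of "\<lambda>i. i \<in> I \<and> B \<inter> X \<subseteq> U i"] that unfolding good_def idx_def by auto
  show thesis
  proof
    show "idx ` {B \<in> balls. good B} \<subseteq> I" using idx by blast
    have "countable balls"
      unfolding balls_def using K(1) by (intro countable_image countable_SIGMA) (auto intro: countable_finite)
    then show "countable (idx ` {B \<in> balls. good B})"
      by (intro countable_image) (rule countable_subset[of _ balls], auto)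
    show "S \<subseteq> (\<Union>i\<in>idx ` {B \<in> balls. good B}. U i)"
    proof
      fix x assume "x \<in> S"
      then obtain i where i: "i \<in> I" "x \<in> U i" using cover by blast
      then have "x \<in> X" using openin_imp_subset[OF opn[OF i(1)]] by blast
      obtain r where r: "r > 0" "ball x r \<inter> X \<subseteq> U i"
        using opn[OF i(1)] i(2) unfolding openin_contains_ball by blast
      obtain n :: nat where n: "1 / Suc n < r / 2"
        using r(1) by (metis half_gt_zero_iff nat_approx_posE)
      obtain c where c: "c \<in> K n" "x \<in> ball c (1 / Suc n)" using K(2) \<open>x \<in> X\<close> by blast
      have "ball c (1 / Suc n) \<subseteq> ball x r"
      proof
        fix y assume "y \<in> ball c (1 / Suc n)"
        then have "dist x y \<le> dist x c + dist c y" "dist x c < 1 / Suc n" "dist c y < 1 / Suc n"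
          using c(2) dist_triangle[of x y c] by (auto simp: dist_commute)
        then show "y \<in> ball x r" using n by simp
      qed
      then have "good (ball c (1 / Suc n))" unfolding good_def using i(1) r(2) by blast
      moreover have "ball c (1 / Suc n) \<in> balls" unfolding balls_def using c(1) by force
      ultimately show "x \<in> (\<Union>i\<in>idx ` {B \<in> balls. good B}. U i)"
        using idx c(2) \<open>x \<in> X\<close> by blast
    qed
  qed
qed

lemma finite_net_if_packing_bounded:
  fixes D :: "'a \<Rightarrow> 'a \<Rightarrow> real"
  assumes "e > 0" and D_self: "\<And>x. D x x = 0" and D_sym: "\<And>x y. D x y = D y x"
    and bound: "\<And>P. finite P \<Longrightarrow> P \<subseteq> A \<Longrightarrow> (\<forall>p\<in>P. \<forall>q\<in>P. p \<noteq> q \<longrightarrow> e \<le> D p q) \<Longrightarrow> card P \<le> b"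
  shows "\<exists>P. finite P \<and> P \<subseteq> A \<and> (\<forall>x\<in>A. \<exists>p\<in>P. D x p < e)"
proof -
  define separated where
    "separated P \<longleftrightarrow> finite P \<and> P \<subseteq> A \<and> (\<forall>p\<in>P. \<forall>q\<in>P. p \<noteq> q \<longrightarrow> e \<le> D p q)" for P
  have "separated {}" unfolding separated_def by simp
  moreover have "\<forall>P. separated P \<longrightarrow> card P < Suc b"
    using bound unfolding separated_def by (simp add: less_Suc_eq_le)
  ultimately obtain P where P: "separated P" and max: "\<And>Q. separated Q \<Longrightarrow> card Q \<le> card P"
    using ex_has_greatest_nat[of separated "{}" card "Suc b"] by blast
  have "\<exists>p\<in>P. D x p < e" if x: "x \<in> A" for x
  proof (rule ccontr)
    assume "\<not> ?thesis"
    then have far: "\<forall>p\<in>P. e \<le> D x p" by (simp add: not_less)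
    then have "x \<notin> P" using D_self \<open>e > 0\<close> by force
    moreover have "separated (insert x P)"
      using P far x D_sym unfolding separated_def by auto
    ultimately show False using max[of "insert x P"] P unfolding separated_def by simp
  qed
  moreover have "finite P" "P \<subseteq> A" using P unfolding separated_def by auto
  ultimately show ?thesis by blast
qed

lemma (in finite_measure) measure_symdiff_triangle:
  assumes "A \<in> sets M" "B \<in> sets M" "C \<in> sets M"
  shows "measure M ((A - C) \<union> (C - A)) \<le> measure M ((A - B) \<union> (B - A)) + measure M ((B - C) \<union> (C - B))"
proof -
  have "measure M ((A - C) \<union> (C - A)) \<le> measure M (((A - B) \<union> (B - A)) \<union> ((B - C) \<union> (C - B)))"
    by (rule finite_measure_mono) (use assms in auto)
  also have "\<dots> \<le> measure M ((A - B) \<union> (B - A)) + measure M ((B - C) \<union> (C - B))"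
    by (rule measure_subadditive) (use assms in auto)
  finally show ?thesis .
qed

lemma (in finite_measure) measure_symdiff_eq_twice_diff:
  assumes A: "A \<in> sets M" and B: "B \<in> sets M" and eq: "measure M A = measure M B"
  shows "measure M ((A - B) \<union> (B - A)) = 2 * measure M (A - B)"
proof -
  have "measure M ((A - B) \<union> (B - A)) = measure M (A - B) + measure M (B - A)"
    by (rule finite_measure_Union) (use A B in auto)
  moreover have "measure M (A - B) = measure M A - measure M (A \<inter> B)"
    using A B by (rule finite_measure_Diff')
  moreover have "measure M (B - A) = measure M B - measure M (B \<inter> A)"
    using B A by (rule finite_measure_Diff')
  ultimately show ?thesis using eq by (simp add: Int_commute)
qed

lemma d_N_nonneg: "0 \<le> d_N lam N x y"
  unfolding d_N_def by simp

lemma d_N_self: "d_N lam N x x = 0"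
  unfolding d_N_def by simp

lemma d_N_sym: "d_N lam N x y = d_N lam N y x"
  unfolding d_N_def by (simp add: Un_commute)

lemma d_N_triangle:
  assumes "finite_measure lam" and "\<And>x. rel_section N x \<in> sets lam"
  shows "d_N lam N x z \<le> d_N lam N x y + d_N lam N y z"
  unfolding d_N_def using assms by (intro finite_measure.measure_symdiff_triangle) auto

section \<open>Sup-norm closeness in the Hilbert cube\<close>

lemma summable_dist_fun_terms:
  "summable (\<lambda>n. (1/2::real)^n * min (dist ((y::nat \<Rightarrow> real) (from_nat n)) (y' (from_nat n))) 1)"
  by (rule summable_comparison_test'[of "\<lambda>n. (1/2)^n"]) (auto simp: summable_geometric_iff)

lemma coordinate_dist_less:
  fixes y y' :: "nat \<Rightarrow> real"
  assumes "dist y y' < (1/2)^(to_nat n) * min \<eta> 1"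
  shows "\<bar>y n - y' n\<bar> < \<eta>"
proof -
  define m where "m = to_nat n"
  have "(\<Sum>i\<in>{m}. (1/2::real)^i * min (dist (y (from_nat i)) (y' (from_nat i))) 1)
        \<le> (\<Sum>i. (1/2)^i * min (dist (y (from_nat i)) (y' (from_nat i))) 1)"
    by (rule sum_le_suminf[OF summable_dist_fun_terms]) auto
  then have "(1/2::real)^m * min (dist (y n) (y' n)) 1 \<le> dist y y'"
    unfolding dist_fun_def m_def by simp
  then have "(1/2::real)^m * min (dist (y n) (y' n)) 1 < (1/2)^m * min \<eta> 1"
    using assms unfolding m_def by linarith
  then have "min (dist (y n) (y' n)) 1 < min \<eta> 1" by (simp add: mult_less_cancel_left)
  then show ?thesis by (auto simp: dist_real_def min_def split: if_splits)
qed

definition sup_close :: "real \<Rightarrow> ('i \<Rightarrow> real) \<Rightarrow> ('i \<Rightarrow> real) \<Rightarrow> bool" where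
  "sup_close r y y' \<longleftrightarrow> (\<forall>n. \<bar>y n - y' n\<bar> \<le> r)"

lemma sup_close_sym: "sup_close r y y' \<Longrightarrow> sup_close r y' y"
  unfolding sup_close_def by (simp add: abs_minus_commute)

lemma sup_close_trans:
  assumes "sup_close r y y'" and "sup_close s y' y''"
  shows "sup_close (r + s) y y''"
  unfolding sup_close_def
proof
  fix n
  have "\<bar>y n - y' n\<bar> \<le> r" "\<bar>y' n - y'' n\<bar> \<le> s" using assms unfolding sup_close_def by auto
  then show "\<bar>y n - y'' n\<bar> \<le> r + s" by linarith
qed

lemma sup_close_eq:
  assumes "\<And>e. e > 0 \<Longrightarrow> sup_close e y y'"
  shows "y = y'"
proof
  fix n
  have "\<bar>y n - y' n\<bar> \<le> 0 + e" if "e > 0" for e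
    using assms[OF that] unfolding sup_close_def by simp
  then have "\<bar>y n - y' n\<bar> \<le> 0" by (rule field_le_epsilon)
  then show "y n = y' n" by simp
qed

lemma dist_le_if_sup_close:
  fixes y y' :: "nat \<Rightarrow> real"
  assumes "sup_close r y y'"
  shows "dist y y' \<le> 2 * r"
proof -
  have r: "\<bar>y n - y' n\<bar> \<le> r" for n using assms unfolding sup_close_def by blast
  have "dist y y' = (\<Sum>n. (1/2)^n * min (dist (y (from_nat n)) (y' (from_nat n))) 1)"
    unfolding dist_fun_def by simp
  also have "\<dots> \<le> (\<Sum>n. (1/2)^n * r)"
  proof (rule suminf_le)
    show "(1/2)^n * min (dist (y (from_nat n)) (y' (from_nat n))) 1 \<le> (1/2)^n * r" for n
      using r[of "from_nat n"] by (intro mult_left_mono) (auto simp: dist_real_def)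
    show "summable (\<lambda>n. (1/2::real)^n * r)"
      by (intro summable_mult2) (simp add: summable_geometric_iff)
  qed (rule summable_dist_fun_terms)
  also have "\<dots> = 2 * r"
    using suminf_mult2[of "\<lambda>n. (1/2::real)^n" r] suminf_geometric[of "1/2::real"]
    by (simp add: summable_geometric_iff)
  finally show ?thesis .
qed

lemma INF_add_diff_le:
  fixes a b c :: "nat \<Rightarrow> real"
  assumes "\<And>m. 0 \<le> a m" and "\<And>m. 0 \<le> c m" and "\<And>m. \<bar>a m - b m\<bar> \<le> r"
  shows "(INF m. a m + c m) - r \<le> (INF m. b m + c m)"
proof (rule cINF_greatest)
  fix m
  have "bdd_below (range (\<lambda>m. a m + c m))"
    by (rule bdd_belowI[of _ 0]) (auto intro!: add_nonneg_nonneg assms)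
  then have "(INF m. a m + c m) \<le> a m + c m" by (rule cINF_lower) simp
  then show "(INF m. a m + c m) - r \<le> b m + c m" using assms(3)[of m] by linarith
qed simp

section \<open>Equicontinuous factors from invariant pseudometrics\<close>

locale invariant_pseudometric =
  fixes G :: "('g, 'm) monoid_scheme" and X0 :: "'a::metric_space set"
    and act :: "'g \<Rightarrow> 'a \<Rightarrow> 'a" and D :: "'a \<Rightarrow> 'a \<Rightarrow> real"
  assumes action: "homeo_action G X0 act"
    and orbits_dense: "\<And>x. x \<in> X0 \<Longrightarrow> X0 \<subseteq> closure (orbit G act x)"
    and X0_nonempty: "X0 \<noteq> {}"
    and D_nonneg: "0 \<le> D x y"
    and D_sym: "D x y = D y x"
    and D_triangle: "D x z \<le> D x y + D y z"
    and D_invariant: "\<lbrakk>g \<in> carrier G; x \<in> X0; y \<in> X0\<rbrakk> \<Longrightarrow> D (act g x) (act g y) = D x y"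
    and D_continuous: "\<lbrakk>x \<in> X0; e > 0\<rbrakk> \<Longrightarrow> \<exists>d>0. \<forall>u\<in>X0. dist u x < d \<longrightarrow> D u x < e"
    and D_totally_bounded: "e > 0 \<Longrightarrow> \<exists>P. finite P \<and> P \<subseteq> X0 \<and> (\<forall>x\<in>X0. \<exists>p\<in>P. D x p < e)"
begin

lemma group: "group G"
  using action unfolding homeo_action_def by blast

lemma act_X0: "g \<in> carrier G \<Longrightarrow> x \<in> X0 \<Longrightarrow> act g x \<in> X0"
  using action unfolding homeo_action_def by blast

lemma act_one: "x \<in> X0 \<Longrightarrow> act \<one>\<^bsub>G\<^esub> x = x"
  using action unfolding homeo_action_def by blast

lemma act_mult:
  "\<lbrakk>g \<in> carrier G; h \<in> carrier G; x \<in> X0\<rbrakk> \<Longrightarrow> act (g \<otimes>\<^bsub>G\<^esub> h) x = act g (act h x)"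
  using action unfolding homeo_action_def by blast

lemma countable_dense_sequence:
  "\<exists>w :: nat \<Rightarrow> 'a. range w \<subseteq> X0 \<and> (\<forall>x\<in>X0. \<forall>e>0. \<exists>n. D x (w n) < e)"
proof -
  have "\<forall>k::nat. \<exists>P. finite P \<and> P \<subseteq> X0 \<and> (\<forall>x\<in>X0. \<exists>p\<in>P. D x p < 1 / Suc k)"
    using D_totally_bounded by simp
  then obtain P where P: "\<And>k. finite (P k)" "\<And>k. P k \<subseteq> X0"
    "\<And>k x. x \<in> X0 \<Longrightarrow> \<exists>p\<in>P k. D x p < 1 / Suc k"
    by metis
  define W where "W = (\<Union>k. P k)"
  have "W \<noteq> {}" unfolding W_def using P(3) X0_nonempty by blast
  moreover have "countable W" unfolding W_def using P(1) by (auto intro: countable_finite)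
  ultimately have range_W: "range (from_nat_into W) = W" by (rule range_from_nat_into)
  have "\<exists>n. D x (from_nat_into W n) < e" if x: "x \<in> X0" and e: "e > 0" for x e
  proof -
    obtain k :: nat where k: "1 / Suc k < e" using e by (metis nat_approx_posE)
    obtain p where p: "p \<in> P k" "D x p < 1 / Suc k" using P(3)[OF x] by blast
    then obtain n where "p = from_nat_into W n" using range_W unfolding W_def by blast
    then have "D x (from_nat_into W n) < e" using p(2) k by simp
    then show ?thesis by blast
  qed
  moreover have "range (from_nat_into W) \<subseteq> X0" using range_W P(2) unfolding W_def by blast
  ultimately show ?thesis by blast
qed

end

locale invariant_pseudometric_coordinates = invariant_pseudometric G X0 act D
  for G :: "('g, 'm) monoid_scheme" and X0 :: "'a::metric_space set"
    and act :: "'g \<Rightarrow> 'a \<Rightarrow> 'a" and D :: "'a \<Rightarrow> 'a \<Rightarrow> real" +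
  fixes w :: "nat \<Rightarrow> 'a"
  assumes w_X0: "w n \<in> X0"
    and w_dense: "\<lbrakk>x \<in> X0; e > 0\<rbrakk> \<Longrightarrow> \<exists>n. D x (w n) < e"
begin

definition coords :: "'a \<Rightarrow> nat \<Rightarrow> real" where
  "coords x = (\<lambda>n. D x (w n))"

definition Y :: "(nat \<Rightarrow> real) set" where
  "Y = closure (coords ` X0)"

text \<open>On \<open>coords x\<close> the infimum equals \<open>D (act g x) (w n)\<close> (attained as \<open>w m\<close> approaches \<open>x\<close>);
  being sup-norm non-expansive in \<open>y\<close>, the formula extends the action from \<open>coords ` X0\<close>
  to its closure.\<close>
definition ext_act :: "'g \<Rightarrow> (nat \<Rightarrow> real) \<Rightarrow> nat \<Rightarrow> real" where
  "ext_act g y = (\<lambda>n. INF m. y m + D (act g (w m)) (w n))"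

lemma coords_sup_close_iff:
  assumes x: "x \<in> X0" and x': "x' \<in> X0"
  shows "sup_close r (coords x) (coords x') \<longleftrightarrow> D x x' \<le> r"
proof
  assume le: "D x x' \<le> r"
  show "sup_close r (coords x) (coords x')"
    unfolding sup_close_def coords_def
  proof
    fix n
    have "D x (w n) \<le> D x x' + D x' (w n)" "D x' (w n) \<le> D x' x + D x (w n)"
      by (rule D_triangle)+
    then show "\<bar>D x (w n) - D x' (w n)\<bar> \<le> r" using le D_sym[of x x'] by linarith
  qed
next
  assume close: "sup_close r (coords x) (coords x')"
  show "D x x' \<le> r"
  proof (rule field_le_epsilon)
    fix e :: real assume "e > 0"
    then obtain n where n: "D x (w n) < e/2" using w_dense[OF x, of "e/2"] by auto
    have "D x x' \<le> D x (w n) + D (w n) x'" by (rule D_triangle)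
    moreover have "\<bar>D x (w n) - D x' (w n)\<bar> \<le> r" using close unfolding sup_close_def coords_def by blast
    ultimately show "D x x' \<le> r + e" using n D_sym[of "w n" x'] by linarith
  qed
qed

lemma coords_continuous: "continuous_on X0 coords"
  unfolding continuous_on_iff
proof (intro ballI allI impI)
  fix x and e :: real assume x: "x \<in> X0" and e: "e > 0"
  obtain d where d: "d > 0" "\<forall>u\<in>X0. dist u x < d \<longrightarrow> D u x < e/4"
    using D_continuous[OF x, of "e/4"] e by auto
  have "dist (coords u) (coords x) < e" if "u \<in> X0" "dist u x < d" for u
  proof -
    have "D u x < e/4" using d(2) that by blast
    then have "sup_close (e/4) (coords u) (coords x)" using coords_sup_close_iff[OF that(1) x] by simp
    then have "dist (coords u) (coords x) \<le> 2 * (e/4)" by (rule dist_le_if_sup_close)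
    then show ?thesis using e by simp
  qed
  with d(1) show "\<exists>d>0. \<forall>u\<in>X0. dist u x < d \<longrightarrow> dist (coords u) (coords x) < e"
    by (intro exI[of _ d] conjI ballI impI) auto
qed

lemma coords_Y: "x \<in> X0 \<Longrightarrow> coords x \<in> Y"
  unfolding Y_def by (rule closure_subset[THEN subsetD], rule imageI)

lemma Y_nonneg:
  assumes y: "y \<in> Y"
  shows "0 \<le> y n"
proof (rule ccontr)
  assume "\<not> 0 \<le> y n"
  then have "0 < (1/2::real)^(to_nat n) * min (- y n) 1" by simp
  then obtain x where "x \<in> X0" "dist (coords x) y < (1/2)^(to_nat n) * min (- y n) 1"
    using y unfolding Y_def closure_approachable by blast
  then have "\<bar>coords x n - y n\<bar> < - y n" "0 \<le> coords x n"
    using coordinate_dist_less D_nonneg unfolding coords_def by auto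
  then show False by linarith
qed

text \<open>By total boundedness, finitely many coordinates determine \<open>D\<close> up to \<open>e\<close>, and the product
  metric controls finitely many coordinates uniformly.\<close>
lemma D_less_if_coords_close:
  assumes e: "e > 0"
  shows "\<exists>\<delta>>0. \<forall>x\<in>X0. \<forall>x'\<in>X0. dist (coords x) (coords x') < \<delta> \<longrightarrow> D x x' < e"
proof -
  obtain P where P: "finite P" "P \<subseteq> X0" "\<forall>x\<in>X0. \<exists>p\<in>P. D x p < e/6"
    using D_totally_bounded[of "e/6"] e by auto
  have "\<exists>n. D p (w n) < e/12" if "p \<in> P" for p
    using w_dense[of p "e/12"] that P(2) e by auto
  then obtain idx where idx: "\<And>p. p \<in> P \<Longrightarrow> D p (w (idx p)) < e/12" by metis
  define \<delta> where "\<delta> = Min (insert 1 ((\<lambda>p. (1/2::real)^(to_nat (idx p)) * min (e/6) 1) ` P))"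
  have "\<delta> > 0" unfolding \<delta>_def using e P(1) by (subst Min_gr_iff) auto
  have \<delta>_le: "\<delta> \<le> (1/2::real)^(to_nat (idx p)) * min (e/6) 1" if "p \<in> P" for p
    unfolding \<delta>_def using P(1) that by (intro Min_le) auto
  have "D x x' < e" if x: "x \<in> X0" and x': "x' \<in> X0" and close: "dist (coords x) (coords x') < \<delta>" for x x'
  proof -
    obtain p where p: "p \<in> P" "D x p < e/6" using P(3) x by blast
    define n where "n = idx p"
    have "\<bar>coords x n - coords x' n\<bar> < e/6"
      using close \<delta>_le[OF p(1)] unfolding n_def by (intro coordinate_dist_less) linarith
    then have "D x' (w n) < D x (w n) + e/6" unfolding coords_def by linarith
    moreover have "D p (w n) < e/12" using idx p(1) unfolding n_def by blast
    moreover have "D x (w n) \<le> D x p + D p (w n)" "D x x' \<le> D x p + D p x'"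
      "D p x' \<le> D p (w n) + D (w n) x'" by (rule D_triangle)+
    moreover have "D (w n) x' = D x' (w n)" by (rule D_sym)
    ultimately show ?thesis using p(2) e by linarith
  qed
  then show ?thesis using \<open>\<delta> > 0\<close> by blast
qed

lemma coords_dense_in_Y: "y \<in> Y \<Longrightarrow> r > 0 \<Longrightarrow> \<exists>x\<in>X0. dist (coords x) y < r"
  unfolding Y_def closure_approachable by simp

lemma sup_close_if_Y_dist_less:
  assumes e: "e > 0"
  shows "\<exists>\<delta>>0. \<forall>y\<in>Y. \<forall>y'\<in>Y. dist y y' < \<delta> \<longrightarrow> sup_close e y y'"
proof -
  obtain \<delta> where \<delta>: "\<delta> > 0" "\<forall>x\<in>X0. \<forall>x'\<in>X0. dist (coords x) (coords x') < \<delta> \<longrightarrow> D x x' < e"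
    using D_less_if_coords_close[OF e] by blast
  have "sup_close e y y'" if y: "y \<in> Y" and y': "y' \<in> Y" and dy: "dist y y' < \<delta>" for y y'
    unfolding sup_close_def
  proof
    fix n
    show "\<bar>y n - y' n\<bar> \<le> e"
    proof (rule field_le_epsilon)
      fix t :: real assume t: "t > 0"
      define r where "r = min ((\<delta> - dist y y') / 2) ((1/2)^(to_nat n) * min (t/2) 1)"
      have "r > 0" unfolding r_def using dy t by simp
      then obtain x x' where x: "x \<in> X0" "dist (coords x) y < r" and x': "x' \<in> X0" "dist (coords x') y' < r"
        using coords_dense_in_Y y y' by blast
      have "dist (coords x) (coords x') \<le> dist (coords x) y + dist y y' + dist (coords x') y'"
        using dist_triangle[of "coords x" "coords x'" y] dist_triangle[of y "coords x'" y']
          dist_commute[of y' "coords x'"] by linarith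
      moreover have "r \<le> (\<delta> - dist y y') / 2" unfolding r_def by (rule min.cobounded1)
      ultimately have "dist (coords x) (coords x') < \<delta>" using x(2) x'(2) by argo
      then have "D x x' \<le> e" using \<delta>(2) x(1) x'(1) by fastforce
      then have "\<bar>coords x n - coords x' n\<bar> \<le> e"
        using coords_sup_close_iff[OF x(1) x'(1)] unfolding sup_close_def by blast
      moreover have "r \<le> (1/2)^(to_nat n) * min (t/2) 1" unfolding r_def by (rule min.cobounded2)
      then have "dist (coords x) y < (1/2)^(to_nat n) * min (t/2) 1"
        "dist (coords x') y' < (1/2)^(to_nat n) * min (t/2) 1"
        using x(2) x'(2) by linarith+
      then have "\<bar>coords x n - y n\<bar> < t/2" "\<bar>coords x' n - y' n\<bar> < t/2"
        by (blast intro: coordinate_dist_less)+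
      ultimately show "\<bar>y n - y' n\<bar> \<le> e + t" by linarith
    qed
  qed
  with \<delta>(1) show ?thesis by (intro exI[of _ \<delta>]) auto
qed

lemma Y_approx_coords:
  assumes y: "y \<in> Y" and e: "e > 0"
  obtains x where "x \<in> X0" and "sup_close e y (coords x)"
proof -
  obtain \<delta> where \<delta>: "\<delta> > 0" "\<forall>y\<in>Y. \<forall>y'\<in>Y. dist y y' < \<delta> \<longrightarrow> sup_close e y y'"
    using sup_close_if_Y_dist_less[OF e] by blast
  obtain x where x: "x \<in> X0" "dist (coords x) y < \<delta>"
    using coords_dense_in_Y[OF y \<delta>(1)] by blast
  then have "sup_close e y (coords x)" using \<delta>(2) y coords_Y by (simp add: dist_commute)
  with x(1) show thesis by (rule that)
qed

lemma ext_act_coords: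
  assumes g: "g \<in> carrier G" and x: "x \<in> X0"
  shows "ext_act g (coords x) = coords (act g x)"
proof
  fix n
  define f where "f m = D x (w m) + D (act g (w m)) (w n)" for m
  have lower: "D (act g x) (w n) \<le> f m" for m
    using D_triangle[of "act g x" "w n" "act g (w m)"] D_invariant[OF g x w_X0]
    unfolding f_def by simp
  have "bdd_below (range f)"
    by (rule bdd_belowI[of _ 0]) (auto simp: f_def intro!: add_nonneg_nonneg D_nonneg)
  have "(INF m. f m) \<le> D (act g x) (w n)"
  proof (rule field_le_epsilon)
    fix e :: real assume "e > 0"
    then obtain m where m: "D x (w m) < e/2" using w_dense[OF x, of "e/2"] by auto
    have "(INF m. f m) \<le> f m" by (rule cINF_lower[OF \<open>bdd_below (range f)\<close>]) simp
    moreover have "D (act g (w m)) (w n) \<le> D (act g (w m)) (act g x) + D (act g x) (w n)"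
      by (rule D_triangle)
    moreover have "D (act g (w m)) (act g x) = D x (w m)"
      using D_invariant[OF g w_X0 x] D_sym by simp
    ultimately show "(INF m. f m) \<le> D (act g x) (w n) + e" using m unfolding f_def by simp
  qed
  moreover have "D (act g x) (w n) \<le> (INF m. f m)" by (rule cINF_greatest) (auto simp: lower)
  ultimately show "ext_act g (coords x) n = coords (act g x) n"
    unfolding ext_act_def coords_def f_def by simp
qed

lemma ext_act_sup_close:
  assumes y: "y \<in> Y" and y': "y' \<in> Y" and close: "sup_close r y y'"
  shows "sup_close r (ext_act g y) (ext_act g y')"
  unfolding sup_close_def
proof
  fix n
  let ?c = "\<lambda>m. D (act g (w m)) (w n)"
  have "\<bar>y m - y' m\<bar> \<le> r" "\<bar>y' m - y m\<bar> \<le> r" for m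
    using close unfolding sup_close_def by (auto simp: abs_minus_commute)
  then have "(INF m. y m + ?c m) - r \<le> (INF m. y' m + ?c m)"
    "(INF m. y' m + ?c m) - r \<le> (INF m. y m + ?c m)"
    by (intro INF_add_diff_le Y_nonneg y y' D_nonneg; simp)+
  then show "\<bar>ext_act g y n - ext_act g y' n\<bar> \<le> r" unfolding ext_act_def by simp
qed

lemma ext_act_Y:
  assumes g: "g \<in> carrier G" and y: "y \<in> Y"
  shows "ext_act g y \<in> Y"
  unfolding Y_def closure_approachable
proof (intro allI impI)
  fix e :: real assume e: "e > 0"
  then obtain x where x: "x \<in> X0" "sup_close (e/4) y (coords x)"
    using Y_approx_coords[OF y, of "e/4"] by auto
  have "sup_close (e/4) (ext_act g y) (coords (act g x))"
    using ext_act_sup_close[OF y coords_Y[OF x(1)] x(2), of g] ext_act_coords[OF g x(1)] by simp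
  then have "dist (coords (act g x)) (ext_act g y) < e"
    using dist_le_if_sup_close[of "e/4"] e by (fastforce simp: dist_commute)
  then show "\<exists>s\<in>coords ` X0. dist s (ext_act g y) < e" using act_X0[OF g x(1)] by blast
qed

lemma ext_act_one:
  assumes y: "y \<in> Y"
  shows "ext_act \<one>\<^bsub>G\<^esub> y = y"
proof (rule sup_close_eq)
  fix e :: real assume "e > 0"
  then obtain x where x: "x \<in> X0" "sup_close (e/2) y (coords x)"
    using Y_approx_coords[OF y, of "e/2"] by auto
  have one: "\<one>\<^bsub>G\<^esub> \<in> carrier G" using monoid.one_closed[OF group.is_monoid[OF group]] .
  have "sup_close (e/2) (ext_act \<one>\<^bsub>G\<^esub> y) (coords x)"
    using ext_act_sup_close[OF y coords_Y[OF x(1)] x(2), of "\<one>\<^bsub>G\<^esub>"]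
      ext_act_coords[OF one x(1)] act_one[OF x(1)]
    by simp
  then show "sup_close e (ext_act \<one>\<^bsub>G\<^esub> y) y"
    using sup_close_trans[OF _ sup_close_sym[OF x(2)]] by fastforce
qed

lemma ext_act_mult:
  assumes g: "g \<in> carrier G" and h: "h \<in> carrier G" and y: "y \<in> Y"
  shows "ext_act (g \<otimes>\<^bsub>G\<^esub> h) y = ext_act g (ext_act h y)"
proof (rule sup_close_eq)
  fix e :: real assume "e > 0"
  then obtain x where x: "x \<in> X0" "sup_close (e/2) y (coords x)"
    using Y_approx_coords[OF y, of "e/2"] by auto
  have gh: "g \<otimes>\<^bsub>G\<^esub> h \<in> carrier G" using monoid.m_closed[OF group.is_monoid[OF group] g h] .
  have eq: "ext_act (g \<otimes>\<^bsub>G\<^esub> h) (coords x) = ext_act g (ext_act h (coords x))"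
    using ext_act_coords[OF gh x(1)] ext_act_coords[OF h x(1)] ext_act_coords[OF g act_X0[OF h x(1)]]
      act_mult[OF g h x(1)] by simp
  have hx: "ext_act h (coords x) \<in> Y" using ext_act_Y[OF h coords_Y[OF x(1)]] .
  have "sup_close (e/2) (ext_act (g \<otimes>\<^bsub>G\<^esub> h) y) (ext_act (g \<otimes>\<^bsub>G\<^esub> h) (coords x))"
    by (rule ext_act_sup_close[OF y coords_Y[OF x(1)] x(2)])
  moreover have "sup_close (e/2) (ext_act g (ext_act h y)) (ext_act g (ext_act h (coords x)))"
    by (intro ext_act_sup_close ext_act_Y[OF h y] hx ext_act_sup_close[OF y coords_Y[OF x(1)] x(2)])
  ultimately show "sup_close e (ext_act (g \<otimes>\<^bsub>G\<^esub> h) y) (ext_act g (ext_act h y))"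
    unfolding eq using sup_close_trans sup_close_sym by fastforce
qed

lemma ext_act_equicontinuous:
  assumes e: "e > 0"
  shows "\<exists>d>0. \<forall>y\<in>Y. \<forall>y'\<in>Y. dist y y' < d \<longrightarrow> (\<forall>g\<in>carrier G. dist (ext_act g y) (ext_act g y') < e)"
proof -
  obtain d where d: "d > 0" "\<forall>y\<in>Y. \<forall>y'\<in>Y. dist y y' < d \<longrightarrow> sup_close (e/4) y y'"
    using sup_close_if_Y_dist_less[of "e/4"] e by auto
  have "dist (ext_act g y) (ext_act g y') < e"
    if "y \<in> Y" "y' \<in> Y" "dist y y' < d" for g y y'
  proof -
    have "sup_close (e/4) (ext_act g y) (ext_act g y')"
      using d(2) that by (intro ext_act_sup_close) auto
    then have "dist (ext_act g y) (ext_act g y') \<le> 2 * (e/4)" by (rule dist_le_if_sup_close)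
    then show ?thesis using e by simp
  qed
  with d(1) show ?thesis by (intro exI[of _ d]) auto
qed

lemma ext_act_continuous:
  assumes g: "g \<in> carrier G"
  shows "continuous_on Y (ext_act g)"
  unfolding continuous_on_iff
proof (intro ballI allI impI)
  fix y and e :: real assume "y \<in> Y" "e > 0"
  then obtain d where "d > 0"
    "\<forall>y\<in>Y. \<forall>y'\<in>Y. dist y y' < d \<longrightarrow> (\<forall>g\<in>carrier G. dist (ext_act g y) (ext_act g y') < e)"
    using ext_act_equicontinuous by blast
  with \<open>y \<in> Y\<close> g show "\<exists>d>0. \<forall>y'\<in>Y. dist y' y < d \<longrightarrow> dist (ext_act g y') (ext_act g y) < e"
    by (intro exI[of _ d]) auto
qed

lemma Y_minimal:
  assumes y: "y \<in> Y"
  shows "closure (orbit G ext_act y) = Y"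
proof
  have "orbit G ext_act y \<subseteq> Y" unfolding orbit_def using ext_act_Y y by blast
  then show "closure (orbit G ext_act y) \<subseteq> Y" unfolding Y_def by (rule closure_minimal) simp
next
  show "Y \<subseteq> closure (orbit G ext_act y)"
  proof
    fix y' assume y': "y' \<in> Y"
    show "y' \<in> closure (orbit G ext_act y)"
      unfolding closure_approachable
    proof (intro allI impI)
      fix e :: real assume e: "e > 0"
      define \<epsilon> where "\<epsilon> = e/8"
      have "\<epsilon> > 0" unfolding \<epsilon>_def using e by simp
      obtain x where x: "x \<in> X0" "sup_close \<epsilon> y (coords x)" using Y_approx_coords[OF y \<open>\<epsilon> > 0\<close>] .
      obtain x' where x': "x' \<in> X0" "sup_close \<epsilon> y' (coords x')" using Y_approx_coords[OF y' \<open>\<epsilon> > 0\<close>] .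
      obtain \<delta> where \<delta>: "\<delta> > 0" "\<forall>y\<in>Y. \<forall>y'\<in>Y. dist y y' < \<delta> \<longrightarrow> sup_close \<epsilon> y y'"
        using sup_close_if_Y_dist_less[OF \<open>\<epsilon> > 0\<close>] by blast
      obtain d where d: "d > 0" "\<forall>u\<in>X0. dist u x' < d \<longrightarrow> dist (coords u) (coords x') < \<delta>"
        using coords_continuous x'(1) \<delta>(1) unfolding continuous_on_iff by blast
      have "x' \<in> closure (orbit G act x)" using orbits_dense[OF x(1)] x'(1) by blast
      then obtain g where g: "g \<in> carrier G" "dist (act g x) x' < d"
        using d(1) unfolding closure_approachable orbit_def by blast
      have gx: "act g x \<in> X0" by (rule act_X0[OF g(1) x(1)])
      have "sup_close \<epsilon> (coords (act g x)) (coords x')"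
        using \<delta>(2) d(2) g(2) gx coords_Y[OF gx] coords_Y[OF x'(1)] by blast
      moreover have "sup_close \<epsilon> (ext_act g y) (coords (act g x))"
        using ext_act_sup_close[OF y coords_Y[OF x(1)] x(2), of g] ext_act_coords[OF g(1) x(1)] by simp
      ultimately have "sup_close (\<epsilon> + \<epsilon> + \<epsilon>) (ext_act g y) y'"
        using sup_close_trans sup_close_sym[OF x'(2)] by blast
      then have "dist (ext_act g y) y' \<le> 2 * (\<epsilon> + \<epsilon> + \<epsilon>)" by (rule dist_le_if_sup_close)
      then have "dist (ext_act g y) y' < e" unfolding \<epsilon>_def using e by simp
      moreover have "ext_act g y \<in> orbit G ext_act y" unfolding orbit_def using g(1) by blast
      ultimately show "\<exists>z\<in>orbit G ext_act y. dist z y' < e" by blast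
    qed
  qed
qed

lemma Y_compact: "compact Y"
  unfolding compact_eq_totally_bounded
proof (intro conjI allI impI)
  show "uniform_space_class.complete Y" unfolding Y_def by (simp add: complete_eq_closed)
next
  fix e :: real assume e: "e > 0"
  obtain P where P: "finite P" "P \<subseteq> X0" "\<forall>x\<in>X0. \<exists>p\<in>P. D x p < e/8"
    using D_totally_bounded[of "e/8"] e by auto
  have "y \<in> (\<Union>p\<in>coords ` P. ball p e)" if y: "y \<in> Y" for y
  proof -
    obtain x where x: "x \<in> X0" "sup_close (e/8) y (coords x)" using Y_approx_coords[OF y, of "e/8"] e by auto
    obtain p where p: "p \<in> P" "D x p < e/8" using P(3) x(1) by blast
    have "sup_close (e/8) (coords x) (coords p)" using coords_sup_close_iff[OF x(1)] P(2) p by auto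
    then have "sup_close (e/8 + e/8) y (coords p)" using sup_close_trans x(2) by blast
    then have "dist y (coords p) \<le> 2 * (e/8 + e/8)" by (rule dist_le_if_sup_close)
    then have "y \<in> ball (coords p) e" using e by (simp add: dist_commute)
    then show ?thesis using p(1) by blast
  qed
  then show "\<exists>k. finite k \<and> Y \<subseteq> (\<Union>p\<in>k. ball p e)" using P(1) by blast
qed

lemma minimal_equicontinuous_Y: "minimal_equicontinuous_system G Y ext_act"
  unfolding minimal_equicontinuous_system_def homeo_action_def
proof (intro conjI ballI)
  show "Y \<noteq> {}" using X0_nonempty coords_Y by blast
qed (simp_all add: Y_compact group ext_act_Y ext_act_continuous ext_act_one ext_act_mult Y_minimal
  ext_act_equicontinuous)

lemma equivariant_factor_coords: "equivariant_factor G X0 act Y ext_act coords"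
  unfolding equivariant_factor_def using coords_continuous coords_Y ext_act_coords by auto

lemma D_zero_if_S_eq:
  assumes "(x, x') \<in> S_eq G X0 act"
  shows "D x x' = 0"
proof -
  have "(x, x') \<in> S_pi X0 coords"
    using assms minimal_equicontinuous_Y equivariant_factor_coords unfolding S_eq_def by blast
  then have "x \<in> X0" "x' \<in> X0" "sup_close 0 (coords x) (coords x')"
    unfolding S_pi_def sup_close_def by auto
  then show ?thesis using coords_sup_close_iff D_nonneg[of x x'] by fastforce
qed

end

context invariant_pseudometric
begin

theorem D_vanishes_on_S_eq:
  assumes "(x, x') \<in> S_eq G X0 act"
  shows "D x x' = 0"
proof -
  from countable_dense_sequence obtain w :: "nat \<Rightarrow> 'a"
    where "range w \<subseteq> X0" and "\<forall>x\<in>X0. \<forall>e>0. \<exists>n. D x (w n) < e"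
    by blast
  then interpret invariant_pseudometric_coordinates G X0 act D w
    by unfold_locales auto
  show ?thesis using assms by (rule D_zero_if_S_eq)
qed

end

section \<open>The pseudometric \<open>d_N\<close>\<close>

locale invariant_measure_setting = prob_space lam for lam :: "'a::metric_space measure" +
  fixes G :: "('g, 'm) monoid_scheme" and X X0 :: "'a set" and act :: "'g \<Rightarrow> 'a \<Rightarrow> 'a"
    and N :: "('a \<times> 'a) set"
  assumes compact_X: "compact X"
    and action: "homeo_action G X act"
    and X0_transitive: "X0 \<subseteq> transitive_points G X act"
    and X0_invariant: "G_invariant G act X0"
    and sets_lam: "sets lam = sets (restrict_space borel X)"
    and measure_preserving: "\<forall>g\<in>carrier G. \<forall>A\<in>sets lam. measure lam (act g -` A \<inter> X) = measure lam A"
    and X0_sets: "X0 \<in> sets lam"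
    and X0_full: "measure lam X0 = 1"
    and N_family: "N \<in> closed_inv_relations G X act"
begin

abbreviation "sec x \<equiv> rel_section N x"
abbreviation "D \<equiv> d_N lam N"

lemma X0_subset: "X0 \<subseteq> X"
  using X0_transitive unfolding transitive_points_def by blast

lemma closure_orbit_eq: "x \<in> X0 \<Longrightarrow> closure (orbit G act x) = X"
  using X0_transitive unfolding transitive_points_def by blast

lemma act_X0: "g \<in> carrier G \<Longrightarrow> x \<in> X0 \<Longrightarrow> act g x \<in> X0"
  using X0_invariant unfolding G_invariant_def by blast

lemma act_continuous: "g \<in> carrier G \<Longrightarrow> continuous_on X (act g)"
  using action unfolding homeo_action_def by blast

lemma sets_lam_iff: "A \<in> sets lam \<longleftrightarrow> A \<subseteq> X \<and> A \<in> sets borel"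
  unfolding sets_lam using compact_imp_closed[OF compact_X]
  by (intro sets_restrict_space_iff) simp

lemma vimage_sets:
  assumes g: "g \<in> carrier G" and A: "A \<in> sets lam"
  shows "act g -` A \<inter> X \<in> sets lam"
proof -
  have "act g \<in> restrict_space borel X \<rightarrow>\<^sub>M restrict_space borel X"
    using action g borel_measurable_continuous_on_restrict[OF act_continuous[OF g]]
    by (intro measurable_restrict_space2) (auto simp: homeo_action_def space_restrict_space)
  from measurable_sets[OF this, of A] show ?thesis
    using A unfolding sets_lam by (simp add: space_restrict_space)
qed

lemma image_sets_measure:
  assumes g: "g \<in> carrier G" and A: "A \<in> sets lam"
  shows "act g ` A \<in> sets lam" and "measure lam (act g ` A) = measure lam A"
proof -
  have ig: "inv\<^bsub>G\<^esub> g \<in> carrier G"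
    using action g unfolding homeo_action_def by simp
  have eq: "act g ` A = act (inv\<^bsub>G\<^esub> g) -` A \<inter> X"
    using homeo_action_image_eq_vimage[OF action g] A sets_lam_iff by blast
  show "act g ` A \<in> sets lam" unfolding eq using ig A by (rule vimage_sets)
  show "measure lam (act g ` A) = measure lam A" unfolding eq using measure_preserving ig A by blast
qed

lemma N_closed: "closed N" and N_subset: "N \<subseteq> X \<times> X"
  using N_family unfolding closed_inv_relations_def by auto

lemma N_act: "g \<in> carrier G \<Longrightarrow> (x, y) \<in> N \<Longrightarrow> (act g x, act g y) \<in> N"
  using N_family unfolding closed_inv_relations_def G_invariant_def by force

lemma section_sets: "sec x \<in> sets lam"
proof -
  have "closed (sec x)"
    unfolding rel_section_def using continuous_closed_vimage[OF N_closed, of "Pair x"] by (simp add: vimage_def)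
  moreover have "sec x \<subseteq> X" using N_subset unfolding rel_section_def by auto
  ultimately show ?thesis unfolding sets_lam_iff by simp
qed

lemma section_act:
  assumes g: "g \<in> carrier G" and x: "x \<in> X"
  shows "sec (act g x) = act g ` sec x"
proof
  show "act g ` sec x \<subseteq> sec (act g x)" using N_act[OF g] unfolding rel_section_def by auto
  show "sec (act g x) \<subseteq> act g ` sec x"
  proof
    fix y assume y: "y \<in> sec (act g x)"
    have ig: "inv\<^bsub>G\<^esub> g \<in> carrier G" using action g unfolding homeo_action_def by simp
    have "y \<in> X" using y N_subset unfolding rel_section_def by auto
    then have "y = act g (act (inv\<^bsub>G\<^esub> g) y)"
      using homeo_action_inv_cancel(2)[OF action g] by simp
    moreover have "act (inv\<^bsub>G\<^esub> g) y \<in> sec x"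
      using N_act[OF ig, of "act g x" y] y homeo_action_inv_cancel(1)[OF action g x]
      unfolding rel_section_def by simp
    ultimately show "y \<in> act g ` sec x" by blast
  qed
qed

lemma D_triangle: "D x z \<le> D x y + D y z"
  by (rule d_N_triangle) (simp_all add: section_sets)

lemma D_invariant:
  assumes g: "g \<in> carrier G" and x: "x \<in> X" and y: "y \<in> X"
  shows "D (act g x) (act g y) = D x y"
proof -
  have inj: "inj_on (act g) X"
    using homeo_action_inv_cancel(1)[OF action g] by (metis inj_onI)
  have sub: "sec x \<subseteq> X" "sec y \<subseteq> X" using N_subset unfolding rel_section_def by auto
  have "(sec (act g x) - sec (act g y)) \<union> (sec (act g y) - sec (act g x))
      = act g ` ((sec x - sec y) \<union> (sec y - sec x))"
    unfolding section_act[OF g x] section_act[OF g y] image_Un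
    using inj_on_image_set_diff[OF inj] sub by auto
  then show ?thesis
    unfolding d_N_def using image_sets_measure(2)[OF g] section_sets by auto
qed

lemma section_diff_tendsto_zero:
  assumes lim: "xs \<longlonglongrightarrow> x"
  shows "(\<lambda>k. measure lam (sec (xs k) - sec x)) \<longlonglongrightarrow> 0"
proof -
  define B where "B m = (\<Union>k\<in>{m..}. sec (xs k) - sec x)" for m
  have B_sets: "range B \<subseteq> sets lam"
    unfolding B_def using section_sets by auto
  have "decseq B"
    unfolding B_def decseq_def by (intro allI impI UN_mono) auto
  have "y \<notin> (\<Inter>m. B m)" for y
  proof (cases "y \<in> sec x")
    case True
    then show ?thesis unfolding B_def by auto
  next
    case False
    have "(\<lambda>k. (xs k, y)) \<longlonglongrightarrow> (x, y)"
      using lim by (intro tendsto_Pair tendsto_const)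
    moreover have "open (- N)" "(x, y) \<in> - N"
      using N_closed False unfolding rel_section_def by auto
    ultimately have "eventually (\<lambda>k. (xs k, y) \<in> - N) sequentially"
      by (rule topological_tendstoD)
    then obtain m where "\<forall>k\<ge>m. (xs k, y) \<notin> N"
      unfolding eventually_sequentially by auto
    then have "y \<notin> B m" unfolding B_def rel_section_def by auto
    then show ?thesis by blast
  qed
  then have "(\<Inter>m. B m) = {}" by blast
  then have lim_B: "(\<lambda>m. measure lam (B m)) \<longlonglongrightarrow> 0"
    using finite_Lim_measure_decseq[OF B_sets \<open>decseq B\<close>] by simp
  have "measure lam (sec (xs m) - sec x) \<le> measure lam (B m)" for m
    using B_sets unfolding B_def by (intro finite_measure_mono) auto
  then show ?thesis
    by (intro tendsto_sandwich[OF _ _ tendsto_const lim_B]) auto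
qed

text \<open>\<open>x'\<close> is a limit of translates of \<open>x\<close>, whose sections all have the measure of \<open>sec x\<close>;
  by upper semicontinuity they are almost contained in \<open>sec x'\<close>.\<close>
lemma section_measure_le:
  assumes x: "x \<in> X0" and x': "x' \<in> X0"
  shows "measure lam (sec x) \<le> measure lam (sec x')"
proof -
  have "x' \<in> closure (orbit G act x)" using closure_orbit_eq[OF x] x' X0_subset by auto
  then obtain s where s: "\<And>n. s n \<in> orbit G act x" and lim: "s \<longlonglongrightarrow> x'"
    unfolding closure_sequential by blast
  have le: "measure lam (sec x) \<le> measure lam (sec x') + measure lam (sec (s n) - sec x')" for n
  proof -
    obtain g where g: "g \<in> carrier G" "s n = act g x" using s[of n] unfolding orbit_def by blast
    have "measure lam (sec x) = measure lam (sec (s n))"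
      using g section_act image_sets_measure(2) section_sets x X0_subset by auto
    also have "\<dots> \<le> measure lam (sec x' \<union> (sec (s n) - sec x'))"
      using section_sets by (intro finite_measure_mono) auto
    also have "\<dots> \<le> measure lam (sec x') + measure lam (sec (s n) - sec x')"
      using section_sets by (intro measure_subadditive) auto
    finally show ?thesis .
  qed
  have "(\<lambda>n. measure lam (sec x') + measure lam (sec (s n) - sec x')) \<longlonglongrightarrow> measure lam (sec x') + 0"
    by (intro tendsto_add tendsto_const section_diff_tendsto_zero[OF lim])
  from LIMSEQ_le_const[OF this] le show ?thesis by simp
qed

lemma D_eq_twice_section_diff:
  assumes "x \<in> X0" "x' \<in> X0"
  shows "D x x' = 2 * measure lam (sec x - sec x')"
  unfolding d_N_def using assms section_sets section_measure_le
  by (intro measure_symdiff_eq_twice_diff) (auto intro: antisym)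

lemma D_tendsto_zero:
  assumes xs: "\<And>k. xs k \<in> X0" and x: "x \<in> X0" and lim: "xs \<longlonglongrightarrow> x"
  shows "(\<lambda>k. D (xs k) x) \<longlonglongrightarrow> 0"
  using tendsto_mult_right_zero[OF section_diff_tendsto_zero[OF lim], of 2]
  by (simp add: D_eq_twice_section_diff[OF xs x])

lemma D_continuous:
  assumes x: "x \<in> X0" and e: "e > 0"
  shows "\<exists>d>0. \<forall>u\<in>X0. dist u x < d \<longrightarrow> D u x < e"
proof -
  have "((\<lambda>u. D u x) \<longlongrightarrow> 0) (at x within X0)"
    unfolding tendsto_at_iff_sequentially comp_def using D_tendsto_zero[OF _ x] by blast
  then obtain d where "d > 0" "\<forall>u\<in>X0. u \<noteq> x \<and> dist u x < d \<longrightarrow> D u x < e"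
    using e unfolding tendsto_iff eventually_at by (auto simp: d_N_nonneg)
  then show ?thesis using e by (metis d_N_self)
qed

lemma ball_X0_sets: "ball z d \<inter> X0 \<in> sets lam"
proof -
  have "ball z d \<inter> X \<in> sets lam"
    unfolding sets_lam_iff using compact_imp_closed[OF compact_X]
    by (auto intro!: sets.Int borel_open borel_closed)
  moreover have "ball z d \<inter> X0 = (ball z d \<inter> X) \<inter> X0" using X0_subset by blast
  ultimately show ?thesis using X0_sets by auto
qed

text \<open>If a ball around a point of \<open>X0\<close> were null, the translates of it would be null as
  well; by density of orbits countably many of them cover \<open>X0\<close>.\<close>
lemma ball_X0_measure_pos:
  assumes z: "z \<in> X0" and d: "d > 0"
  shows "0 < measure lam (ball z d \<inter> X0)"
proof (rule ccontr)
  let ?B = "ball z d \<inter> X0"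
  assume "\<not> ?thesis"
  then have B_null: "measure lam ?B = 0" using measure_nonneg[of lam ?B] by linarith
  define U where "U g = X \<inter> act g -` ball z d" for g
  have "openin (top_of_set X) (U g)" if "g \<in> carrier G" for g
    unfolding U_def using act_continuous[OF that] by (intro continuous_openin_preimage_gen) auto
  moreover have "X0 \<subseteq> (\<Union>g\<in>carrier G. U g)"
  proof
    fix x assume x: "x \<in> X0"
    then have "z \<in> closure (orbit G act x)" using closure_orbit_eq z X0_subset by auto
    then obtain g where "g \<in> carrier G" "dist (act g x) z < d"
      using d unfolding closure_approachable orbit_def by auto
    then show "x \<in> (\<Union>g\<in>carrier G. U g)"
      unfolding U_def using x X0_subset by (auto simp: dist_commute)
  qed
  ultimately obtain H where H: "H \<subseteq> carrier G" "countable H" "X0 \<subseteq> (\<Union>g\<in>H. U g)"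
    by (rule compact_countable_subcover[OF compact_X])
  have "X0 \<subseteq> (\<Union>g\<in>H. act g -` ?B \<inter> X)"
  proof
    fix x assume x: "x \<in> X0"
    then obtain g where g: "g \<in> H" "x \<in> U g" using H(3) by blast
    then have "act g x \<in> ?B" using act_X0[OF _ x] H(1) unfolding U_def by auto
    then show "x \<in> (\<Union>g\<in>H. act g -` ?B \<inter> X)" using g x X0_subset by blast
  qed
  moreover have "(\<Union>g\<in>H. act g -` ?B \<inter> X) \<in> null_sets lam"
  proof (intro null_sets_UN' H(2) null_setsI)
    fix g assume "g \<in> H"
    then have g: "g \<in> carrier G" using H(1) by blast
    show "act g -` ?B \<inter> X \<in> sets lam" using vimage_sets[OF g ball_X0_sets] .
    have "measure lam (act g -` ?B \<inter> X) = measure lam ?B"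
      using measure_preserving g ball_X0_sets by blast
    then show "emeasure lam (act g -` ?B \<inter> X) = 0"
      using B_null by (simp add: emeasure_eq_measure)
  qed
  ultimately have "X0 \<in> null_sets lam" using X0_sets null_sets_subset by blast
  then have "measure lam X0 = 0" by (rule measure_eq_0_null_sets)
  with X0_full show False by simp
qed

lemma card_separated_orbit_le:
  assumes z: "z \<in> X0" and B: "B \<subseteq> X0" "B \<in> sets lam" and close: "\<And>u. u \<in> B \<Longrightarrow> D u z < r"
    and P: "finite P" "P \<subseteq> orbit G act z"
    and separated: "\<And>p q. p \<in> P \<Longrightarrow> q \<in> P \<Longrightarrow> p \<noteq> q \<Longrightarrow> 2 * r \<le> D p q"
  shows "card P * measure lam B \<le> 1"
proof -
  have "\<forall>p\<in>P. \<exists>h. h \<in> carrier G \<and> p = act h z" using P(2) unfolding orbit_def by blast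
  then obtain g where g: "\<And>p. p \<in> P \<Longrightarrow> g p \<in> carrier G \<and> p = act (g p) z"
    by metis
  define E where "E p = act (g p) ` B" for p
  have E: "E p \<in> sets lam" "measure lam (E p) = measure lam B" if "p \<in> P" for p
    unfolding E_def using image_sets_measure g[OF that] B(2) by auto
  have near: "D u p < r" if p: "p \<in> P" and u: "u \<in> E p" for p u
  proof -
    obtain b where b: "b \<in> B" "u = act (g p) b" using u unfolding E_def by blast
    have gp: "g p \<in> carrier G" and p_eq: "act (g p) z = p" using g[OF p] by auto
    have "D u p = D (act (g p) b) (act (g p) z)" using b(2) p_eq by simp
    also have "\<dots> = D b z" by (rule D_invariant) (use gp b(1) B(1) z X0_subset in auto)
    finally show ?thesis using close[OF b(1)] by simp
  qed
  have "disjoint_family_on E P"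
    unfolding disjoint_family_on_def
  proof (intro ballI impI, rule ccontr)
    fix p q assume pq: "p \<in> P" "q \<in> P" "p \<noteq> q" and "E p \<inter> E q \<noteq> {}"
    then obtain u where "u \<in> E p" "u \<in> E q" by blast
    then have "D u p < r" "D u q < r" using near pq by auto
    then have "D p q < 2 * r" using D_triangle[of p q u] d_N_sym[of lam N p u] by linarith
    with separated[OF pq] show False by simp
  qed
  then have "measure lam (\<Union>p\<in>P. E p) = (\<Sum>p\<in>P. measure lam (E p))"
    using E(1) P(1) by (intro finite_measure_finite_Union) auto
  also have "\<dots> = card P * measure lam B" using E(2) by simp
  finally show ?thesis using prob_le_1[of "\<Union>p\<in>P. E p"] by simp
qed

text \<open>A maximal \<open>e/2\<close>-separated set in one orbit has bounded size by the previous lemma,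
  so it is a finite net of that orbit, and hence, by density and continuity, of \<open>X0\<close>.\<close>
lemma D_totally_bounded:
  assumes e: "e > 0"
  shows "\<exists>P. finite P \<and> P \<subseteq> X0 \<and> (\<forall>x\<in>X0. \<exists>p\<in>P. D x p < e)"
proof -
  obtain z where z: "z \<in> X0" using X0_full by fastforce
  obtain d where d: "d > 0" "\<forall>u\<in>X0. dist u z < d \<longrightarrow> D u z < e/4"
    using D_continuous[OF z, of "e/4"] e by auto
  define \<beta> where "\<beta> = measure lam (ball z d \<inter> X0)"
  have "\<beta> > 0" unfolding \<beta>_def using ball_X0_measure_pos[OF z d(1)] .
  have bound: "card P \<le> nat \<lceil>1 / \<beta>\<rceil>"
    if "finite P" "P \<subseteq> orbit G act z" "\<forall>p\<in>P. \<forall>q\<in>P. p \<noteq> q \<longrightarrow> e/2 \<le> D p q" for P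
  proof -
    have "card P * \<beta> \<le> 1" unfolding \<beta>_def
      using that d(2) z ball_X0_sets
      by (intro card_separated_orbit_le[where r="e/4"]) (auto simp: dist_commute)
    then have "real (card P) \<le> 1 / \<beta>" using \<open>\<beta> > 0\<close> by (simp add: field_simps)
    then show ?thesis by linarith
  qed
  obtain P where P: "finite P" "P \<subseteq> orbit G act z" "\<forall>q\<in>orbit G act z. \<exists>p\<in>P. D q p < e/2"
    using finite_net_if_packing_bounded[where D=D and e="e/2" and A="orbit G act z",
        OF _ d_N_self d_N_sym bound] e by auto
  have orbit_X0: "orbit G act z \<subseteq> X0" unfolding orbit_def using act_X0 z by auto
  have "\<exists>p\<in>P. D x p < e" if x: "x \<in> X0" for x
  proof -
    obtain d' where d': "d' > 0" "\<forall>u\<in>X0. dist u x < d' \<longrightarrow> D u x < e/2"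
      using D_continuous[OF x, of "e/2"] e by auto
    have "x \<in> closure (orbit G act z)" using closure_orbit_eq[OF z] x X0_subset by auto
    then obtain q where q: "q \<in> orbit G act z" "dist q x < d'"
      using d'(1) unfolding closure_approachable by blast
    obtain p where "p \<in> P" "D q p < e/2" using P(3) q(1) by blast
    moreover have "D x q < e/2" using d' q orbit_X0 d_N_sym[of lam N x q] by auto
    ultimately show ?thesis using D_triangle[of x p q] by force
  qed
  then show ?thesis using P(1,2) orbit_X0 by blast
qed

lemma invariant_pseudometric_d_N: "invariant_pseudometric G X0 act D"
proof
  show "homeo_action G X0 act" by (rule homeo_action_restrict[OF action X0_subset X0_invariant])
  show "X0 \<subseteq> closure (orbit G act x)" if "x \<in> X0" for x
    using closure_orbit_eq[OF that] X0_subset by simp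
  show "X0 \<noteq> {}" using X0_full by auto
  show "0 \<le> D x y" for x y by (rule d_N_nonneg)
  show "D x y = D y x" for x y by (rule d_N_sym)
  show "D x z \<le> D x y + D y z" for x y z by (rule D_triangle)
  show "D (act g x) (act g y) = D x y" if "g \<in> carrier G" "x \<in> X0" "y \<in> X0" for g x y
    using D_invariant that X0_subset by blast
  show "\<exists>d>0. \<forall>u\<in>X0. dist u x < d \<longrightarrow> D u x < e" if "x \<in> X0" "e > 0" for x e
    using D_continuous that by blast
  show "\<exists>P. finite P \<and> P \<subseteq> X0 \<and> (\<forall>x\<in>X0. \<exists>p\<in>P. D x p < e)" if "e > 0" for e
    using D_totally_bounded that by blast
qed

end

theorem mainTheorem7:
  fixes G :: "('g, 'm) monoid_scheme"
    and X X0 :: "'a::metric_space set"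
    and act :: "'g \<Rightarrow> 'a \<Rightarrow> 'a"
    and lam :: "'a measure"
  assumes "compact X"
    and "homeo_action G X act"
    and "top_transitive G X act"
    and "X0 \<subseteq> transitive_points G X act"
    and "closure X0 = X"
    and "G_invariant G act X0"
    and "prob_space lam"
    and "sets lam = sets (restrict_space borel X)"
    and "\<forall>g\<in>carrier G. \<forall>A\<in>sets lam. measure lam (act g -` A \<inter> X) = measure lam A"
    and "X0 \<in> sets lam"
    and "measure lam X0 = 1"
  shows "S_eq G X0 act \<subseteq> (\<Inter>N\<in>closed_inv_relations G X act. K0 lam X0 N)"
proof (intro subsetI INT_I)
  fix z N assume z: "z \<in> S_eq G X0 act" and N: "N \<in> closed_inv_relations G X act"
  interpret invariant_measure_setting lam G X X0 act N
    by (intro invariant_measure_setting.intro invariant_measure_setting_axioms.intro) (use assms N in auto)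
  obtain x x' where xx': "z = (x, x')" "x \<in> X0" "x' \<in> X0"
    using z unfolding S_eq_def by blast
  have "d_N lam N x x' = 0"
    using invariant_pseudometric.D_vanishes_on_S_eq[OF invariant_pseudometric_d_N] z xx'(1) by blast
  then show "z \<in> K0 lam X0 N" unfolding K0_def using xx' by simp
qed

end
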